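(* Let $n\ge1$, $P(x)=\frac{c_n}{(1+|x|^2)^{\frac{n+1}{2}}}$ with $c_n$ chosen so that $\int_{\mathbb{R}^n}P=1$, and $\mathcal{M}_P(\mu)(x)=\sup_{r>0}P_r*\mu(x)$ where $P_r(x)=r^{-n}P(x/r)$. Then for every finite positive measure $V$ on $\mathbb{R}^n$ absolutely continuous with respect to Lebesgue measure and every fixed $\rho>0$, $$\lim_{t\to0^+}\Big\|\mathcal{M}_P(V_t)(x)-\frac{c_n n^{\frac n2}}{(1+n)^{\frac{n+1}{2}}}\,\frac{V(\mathbb{R}^n)}{|x|^n}\Big\|_{L^{1,\infty}(\mathbb{R}^n\setminus B(0,\rho),\,dx)}=0.$$
   Context: $P_r*\mu(x)=\int_{\mathbb{R}^n}P_r(x-y)\,d\mu(y)$. $V_t(E)=V(E/t)$ with $E/t=\{x/t:x\in E\}$. For a measurable set $E$, $\|f\|_{L^{1,\infty}(E)}=\sup_{\lambda>0}\lambda|\{x\in E:|f(x)|>\lambda\}|$. *)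

theory Defs
  imports "HOL-Analysis.Analysis"
begin

definition pk_const :: "'a::euclidean_space itself \<Rightarrow> real" where
  "pk_const _ = 1 / (\<integral>x. 1 / (1 + (norm (x::'a))\<^sup>2) powr ((real DIM('a) + 1) / 2) \<partial>lborel)"

definition poisson_kernel :: "'a::euclidean_space \<Rightarrow> real" where
  "poisson_kernel x = pk_const TYPE('a) / (1 + (norm x)\<^sup>2) powr ((real DIM('a) + 1) / 2)"

definition poisson_dil :: "real \<Rightarrow> 'a::euclidean_space \<Rightarrow> real" where
  "poisson_dil r x = r powr (- real DIM('a)) * poisson_kernel (x /\<^sub>R r)"

definition poisson_conv :: "real \<Rightarrow> 'a::euclidean_space measure \<Rightarrow> 'a \<Rightarrow> ennreal" where
  "poisson_conv r \<mu> x = (\<integral>\<^sup>+ y. ennreal (poisson_dil r (x - y)) \<partial>\<mu>)"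

definition max_poisson :: "'a::euclidean_space measure \<Rightarrow> 'a \<Rightarrow> ennreal" where
  "max_poisson \<mu> x = (SUP r\<in>{0<..}. poisson_conv r \<mu> x)"

text \<open>V_t(E) = V(E/t), i.e. the push-forward of V under y \<mapsto> t y.\<close>
definition meas_dilate :: "real \<Rightarrow> 'a::euclidean_space measure \<Rightarrow> 'a measure" where
  "meas_dilate t V = distr V borel (\<lambda>y. t *\<^sub>R y)"

definition weak_L1_norm :: "'a::euclidean_space set \<Rightarrow> ('a \<Rightarrow> real) \<Rightarrow> ennreal" where
  "weak_L1_norm E f = (SUP s\<in>{0::real<..}. ennreal s * emeasure lebesgue {x\<in>E. \<bar>f x\<bar> > s})"

end

theory Submission
  imports Defs
begin

text \<open>
  Write \<open>C = c\<^sub>n n\<^bsup>n/2\<^esup> / (1 + n)\<^bsup>(n+1)/2\<^esup>\<close>; then \<open>sup\<^sub>r P\<^sub>r(x) = C / |x|\<^sup>n\<close>, attained at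
  \<open>r = |x| / sqrt n\<close>. Fix \<open>R\<close> and split \<open>V\<^sub>t\<close> into its part inside \<open>B(0, t R)\<close> and the rest.
  For \<open>|x| \<ge> \<rho>\<close> a point \<open>z\<close> of the inner part satisfies \<open>|z| \<le> d |x|\<close> with \<open>d = t R / \<rho>\<close>,
  so \<open>P\<^sub>r(x - z)\<close> is comparable to \<open>P\<^sub>r(x)\<close> up to the factors \<open>(1 - d)\<^bsup>-n\<^esup>\<close> and
  \<open>(1 + d)\<^bsup>-(n+1)\<^esup>\<close>. Hence \<open>|\<M>\<^sub>P(V\<^sub>t)(x) - C V(\<real>\<^sup>n) / |x|\<^sup>n|\<close> is at most
  \<open>C (V(\<real>\<^sup>n) O(d) + V(|y| > R)) / |x|\<^sup>n\<close> plus the maximal function of the outer part, whose mass is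
  \<open>V(|y| > R)\<close>. The first term has weak-\<open>L\<^sup>1\<close> norm \<open>O(d + V(|y| > R))\<close>, the second one is
  controlled by the weak type (1,1) bound for \<open>\<M>\<^sub>P\<close>, proved by dyadic decomposition of the kernel and
  the Vitali covering lemma. Let \<open>t \<rightarrow> 0\<close>, then \<open>R \<rightarrow> \<infinity>\<close>.
\<close>
lemma powr_half_power2:
  fixes y :: real
  assumes "y > 0"
  shows "(y powr (real k / 2))\<^sup>2 = y ^ k"
proof -
  have "(y powr (real k / 2))\<^sup>2 = y powr (of_nat 2 * (real k / 2))"
    using assms by (intro powr_power) simp
  also have "\<dots> = y ^ k"
    using assms by (simp add: powr_realpow)
  finally show ?thesis .
qed

lemma powr_odd_half_power2:
  fixes y :: real
  assumes "y \<ge> 0"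
  shows "(y powr ((real n + 1) / 2))\<^sup>2 = y ^ (n + 1)"
proof (cases "y = 0")
  case False
  then show ?thesis
    using assms powr_half_power2[of y "n + 1"] by (simp add: add.commute)
qed simp

lemma power2_powr_odd_half:
  fixes b :: real
  assumes "b \<ge> 0"
  shows "(b\<^sup>2) powr ((real n + 1) / 2) = b ^ (n + 1)"
proof -
  have "(b\<^sup>2) powr ((real n + 1) / 2) = (b powr ((real n + 1) / 2))\<^sup>2"
    by (simp only: power2_eq_square powr_mult)
  also have "\<dots> = b ^ (n + 1)"
    using assms by (rule powr_odd_half_power2)
  finally show ?thesis .
qed

lemma bernoulli_profile_bound:
  fixes u :: real
  assumes "n \<ge> 1" "u \<ge> 0"
  shows "(real n + 1) ^ (n + 1) * u \<le> real n ^ n * (1 + u) ^ (n + 1)"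
proof -
  define x where "x = (real n * u - 1) / (real n + 1)"
  have "real n * u \<ge> 0"
    using assms by simp
  then have "-1 \<le> x"
    unfolding x_def by (simp add: field_simps)
  then have bernoulli: "1 + real (n + 1) * x \<le> (1 + x) ^ (n + 1)"
    by (rule Bernoulli_inequality)
  have lhs: "1 + real (n + 1) * x = real n * u"
    unfolding x_def by (simp add: field_simps)
  have "1 + x = real n * (1 + u) / (real n + 1)"
    unfolding x_def by (simp add: field_simps)
  then have "1 + u = ((real n + 1) / real n) * (1 + x)"
    using assms by simp
  then have "(1 + u) ^ (n + 1) = ((real n + 1) / real n) ^ (n + 1) * (1 + x) ^ (n + 1)"
    by (simp only: power_mult_distrib)
  then have "real n ^ n * (1 + u) ^ (n + 1)
      = real n ^ n * ((real n + 1) / real n) ^ (n + 1) * (1 + x) ^ (n + 1)"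
    by simp
  also have "real n ^ n * ((real n + 1) / real n) ^ (n + 1) = (real n + 1) ^ (n + 1) / real n"
    using assms by (simp add: power_divide field_simps)
  finally have rhs: "real n ^ n * (1 + u) ^ (n + 1) = (real n + 1) ^ (n + 1) / real n * (1 + x) ^ (n + 1)" .
  have "(real n + 1) ^ (n + 1) / real n * (real n * u)
      \<le> (real n + 1) ^ (n + 1) / real n * (1 + x) ^ (n + 1)"
    using bernoulli lhs by (intro mult_left_mono) auto
  then show ?thesis
    using assms unfolding rhs by simp
qed

text \<open>
  The profile \<open>r \<mapsto> r / (r\<^sup>2 + a\<^sup>2) powr ((n + 1) / 2)\<close> of the dilated Poisson kernel at a point
  of norm \<open>a\<close> is maximal at \<open>r = a / sqrt n\<close>; squaring reduces the bound to Bernoulli's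
  inequality in \<open>u = r\<^sup>2 / a\<^sup>2\<close>.
\<close>

lemma poisson_profile_le:
  fixes r a :: real
  assumes n: "n \<ge> 1" and r: "r > 0" and a: "a > 0"
  shows "r / (r\<^sup>2 + a\<^sup>2) powr ((real n + 1) / 2)
    \<le> real n powr (real n / 2) / (1 + real n) powr ((real n + 1) / 2) / a ^ n"
proof -
  define P where "P = (r\<^sup>2 + a\<^sup>2) powr ((real n + 1) / 2)"
  define Q where "Q = (1 + real n) powr ((real n + 1) / 2)"
  define N where "N = real n powr (real n / 2)"
  have P: "P > 0" and Q: "Q > 0" and N: "N > 0"
    unfolding P_def Q_def N_def using r n by simp_all
  have "(real n + 1) ^ (n + 1) * r\<^sup>2 * (a\<^sup>2) ^ n
      = (real n + 1) ^ (n + 1) * (r\<^sup>2 / a\<^sup>2) * (a\<^sup>2) ^ (n + 1)"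
    using a by (simp add: field_simps)
  also have "\<dots> \<le> real n ^ n * (1 + r\<^sup>2 / a\<^sup>2) ^ (n + 1) * (a\<^sup>2) ^ (n + 1)"
    using bernoulli_profile_bound[OF n, of "r\<^sup>2 / a\<^sup>2"] by (intro mult_right_mono) auto
  also have "\<dots> = real n ^ n * ((1 + r\<^sup>2 / a\<^sup>2) * a\<^sup>2) ^ (n + 1)"
    by (simp add: power_mult_distrib)
  also have "(1 + r\<^sup>2 / a\<^sup>2) * a\<^sup>2 = r\<^sup>2 + a\<^sup>2"
    using a by (simp add: field_simps)
  finally have "(real n + 1) ^ (n + 1) * r\<^sup>2 * (a\<^sup>2) ^ n \<le> real n ^ n * (r\<^sup>2 + a\<^sup>2) ^ (n + 1)" .
  moreover have "(r * Q * a ^ n)\<^sup>2 = (real n + 1) ^ (n + 1) * r\<^sup>2 * (a\<^sup>2) ^ n"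
    unfolding power_mult_distrib Q_def powr_odd_half_power2[of "1 + real n", simplified]
    by (simp add: power_mult[symmetric] mult.commute add.commute)
  moreover have "(N * P)\<^sup>2 = real n ^ n * (r\<^sup>2 + a\<^sup>2) ^ (n + 1)"
    unfolding power_mult_distrib N_def P_def
    using n by (simp add: powr_half_power2 powr_odd_half_power2)
  ultimately have "(r * Q * a ^ n)\<^sup>2 \<le> (N * P)\<^sup>2"
    by simp
  then have "r * Q * a ^ n \<le> N * P"
    by (rule power2_le_imp_le) (use N P in simp)
  then show ?thesis
    unfolding P_def[symmetric] Q_def[symmetric] N_def[symmetric]
    using P Q a by (simp add: field_simps)
qed

lemma poisson_profile_max:
  fixes a :: real
  assumes n: "n \<ge> 1" and a: "a > 0"
  shows "(a / sqrt n) / ((a / sqrt n)\<^sup>2 + a\<^sup>2) powr ((real n + 1) / 2)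
    = real n powr (real n / 2) / (1 + real n) powr ((real n + 1) / 2) / a ^ n"
proof -
  define r where "r = a / sqrt n"
  have r: "r > 0" and r2: "r\<^sup>2 = a\<^sup>2 / real n"
    unfolding r_def using a n by (simp_all add: power_divide)
  define P where "P = (r\<^sup>2 + a\<^sup>2) powr ((real n + 1) / 2)"
  define Q where "Q = (1 + real n) powr ((real n + 1) / 2)"
  define N where "N = real n powr (real n / 2)"
  have P: "P > 0" and Q: "Q > 0" and N: "N > 0"
    unfolding P_def Q_def N_def using r n by simp_all
  have "r\<^sup>2 + a\<^sup>2 = a\<^sup>2 * (1 + real n) / real n"
    using r2 n by (simp add: field_simps)
  then have "(N * P)\<^sup>2 = real n ^ n * (a\<^sup>2 * (1 + real n) / real n) ^ (n + 1)"
    unfolding power_mult_distrib N_def P_def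
    using n r by (simp add: powr_half_power2 powr_odd_half_power2)
  also have "\<dots> = real n ^ n * ((a\<^sup>2) ^ (n + 1) * (1 + real n) ^ (n + 1) / real n ^ (n + 1))"
    by (simp add: power_divide power_mult_distrib)
  also have "\<dots> = (a\<^sup>2) ^ (n + 1) * (1 + real n) ^ (n + 1) / real n"
    using n by (simp add: field_simps)
  also have "\<dots> = (r * Q * a ^ n)\<^sup>2"
    unfolding power_mult_distrib Q_def powr_odd_half_power2[of "1 + real n", simplified]
    using n by (simp add: r2 field_simps flip: power_mult)
  finally have "r * Q * a ^ n = N * P"
    by (rule power2_eq_imp_eq[symmetric]) (use r Q a N P in simp_all)
  then show ?thesis
    unfolding r_def[symmetric] P_def[symmetric] Q_def[symmetric] N_def[symmetric]
    using P Q a by (simp add: field_simps)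
qed

definition poisson_peak_const :: "'a::euclidean_space itself \<Rightarrow> real" where
  "poisson_peak_const _ = pk_const TYPE('a) * real DIM('a) powr (real DIM('a) / 2)
     / (1 + real DIM('a)) powr ((real DIM('a) + 1) / 2)"

lemma DIM_ge_1: "DIM('a::euclidean_space) \<ge> 1"
  by (simp add: DIM_positive Suc_le_eq)

lemma pk_const_nonneg: "pk_const TYPE('a::euclidean_space) \<ge> 0"
  unfolding pk_const_def by (intro divide_nonneg_nonneg integral_nonneg_AE) auto

lemma poisson_peak_const_nonneg: "poisson_peak_const TYPE('a::euclidean_space) \<ge> 0"
  unfolding poisson_peak_const_def using pk_const_nonneg[where 'a='a] by simp

lemma poisson_dil_eq:
  fixes z :: "'a::euclidean_space"
  assumes r: "r > 0"
  shows "poisson_dil r z = pk_const TYPE('a) * (r / (r\<^sup>2 + (norm z)\<^sup>2) powr ((real DIM('a) + 1) / 2))"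
proof -
  define p where "p = (real DIM('a) + 1) / 2"
  have "1 + (norm (z /\<^sub>R r))\<^sup>2 = (r\<^sup>2 + (norm z)\<^sup>2) / r\<^sup>2"
    using r by (simp add: field_simps power_divide)
  then have "(1 + (norm (z /\<^sub>R r))\<^sup>2) powr p = (r\<^sup>2 + (norm z)\<^sup>2) powr p / (r\<^sup>2) powr p"
    by (simp add: powr_divide)
  also have "(r\<^sup>2) powr p = r ^ (DIM('a) + 1)"
    unfolding p_def using r by (intro power2_powr_odd_half) simp
  finally have kernel: "(1 + (norm (z /\<^sub>R r))\<^sup>2) powr p = (r\<^sup>2 + (norm z)\<^sup>2) powr p / r ^ (DIM('a) + 1)" .
  have "r powr (- real DIM('a)) = 1 / r ^ DIM('a)"
    using r by (simp add: powr_minus powr_realpow divide_inverse)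
  then show ?thesis
    unfolding poisson_dil_def poisson_kernel_def p_def[symmetric] kernel
    using r by (simp add: field_simps)
qed

lemma poisson_dil_le_peak:
  fixes z :: "'a::euclidean_space"
  assumes r: "r > 0" and z: "z \<noteq> 0"
  shows "poisson_dil r z \<le> poisson_peak_const TYPE('a) / (norm z) ^ DIM('a)"
proof -
  have "pk_const TYPE('a) * (r / (r\<^sup>2 + (norm z)\<^sup>2) powr ((real DIM('a) + 1) / 2))
      \<le> pk_const TYPE('a) * (real DIM('a) powr (real DIM('a) / 2)
          / (1 + real DIM('a)) powr ((real DIM('a) + 1) / 2) / (norm z) ^ DIM('a))"
    using r z DIM_ge_1 pk_const_nonneg by (intro mult_left_mono poisson_profile_le) auto
  then show ?thesis
    unfolding poisson_dil_eq[OF r] poisson_peak_const_def by simp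
qed

lemma poisson_dil_peak:
  fixes x :: "'a::euclidean_space"
  assumes x: "x \<noteq> 0"
  shows "poisson_dil (norm x / sqrt DIM('a)) x = poisson_peak_const TYPE('a) / (norm x) ^ DIM('a)"
proof -
  have r: "norm x / sqrt DIM('a) > 0"
    using x by simp
  show ?thesis
    unfolding poisson_dil_eq[OF r] poisson_peak_const_def
    using poisson_profile_max[OF DIM_ge_1[where 'a='a], of "norm x"] x by simp
qed

lemma poisson_dil_lower_of_norm_le:
  fixes z x :: "'a::euclidean_space"
  assumes r: "r > 0" and d: "d \<ge> 0" and le: "norm z \<le> (1 + d) * norm x"
  shows "poisson_dil r x / (1 + d) ^ (DIM('a) + 1) \<le> poisson_dil r z"
proof -
  define p where "p = (real DIM('a) + 1) / 2"
  have "(norm z)\<^sup>2 \<le> ((1 + d) * norm x)\<^sup>2"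
    using le by (intro power_mono) auto
  moreover have "1 * r\<^sup>2 \<le> (1 + d)\<^sup>2 * r\<^sup>2"
    using d by (intro mult_right_mono one_le_power) auto
  moreover have "(1 + d)\<^sup>2 * (r\<^sup>2 + (norm x)\<^sup>2) = (1 + d)\<^sup>2 * r\<^sup>2 + ((1 + d) * norm x)\<^sup>2"
    by (simp add: power2_eq_square algebra_simps)
  ultimately have "r\<^sup>2 + (norm z)\<^sup>2 \<le> (1 + d)\<^sup>2 * (r\<^sup>2 + (norm x)\<^sup>2)"
    by linarith
  then have "(r\<^sup>2 + (norm z)\<^sup>2) powr p \<le> ((1 + d)\<^sup>2 * (r\<^sup>2 + (norm x)\<^sup>2)) powr p"
    unfolding p_def by (intro powr_mono2) auto
  also have "\<dots> = (1 + d) ^ (DIM('a) + 1) * (r\<^sup>2 + (norm x)\<^sup>2) powr p"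
    unfolding powr_mult p_def using d by (subst power2_powr_odd_half) auto
  finally have "r / ((1 + d) ^ (DIM('a) + 1) * (r\<^sup>2 + (norm x)\<^sup>2) powr p) \<le> r / (r\<^sup>2 + (norm z)\<^sup>2) powr p"
    using r d by (intro divide_left_mono) auto
  then have "(r / (r\<^sup>2 + (norm x)\<^sup>2) powr p) / (1 + d) ^ (DIM('a) + 1) \<le> r / (r\<^sup>2 + (norm z)\<^sup>2) powr p"
    by (simp add: field_simps)
  then show ?thesis
    unfolding poisson_dil_eq[OF r] p_def[symmetric]
    using pk_const_nonneg[where 'a='a] mult_left_mono by fastforce
qed

lemma poisson_dil_le_center:
  fixes w :: "'a::euclidean_space"
  assumes r: "r > 0"
  shows "poisson_dil r w \<le> pk_const TYPE('a) / r ^ DIM('a)"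
proof -
  have "r ^ (DIM('a) + 1) = (r\<^sup>2) powr ((real DIM('a) + 1) / 2)"
    using r by (simp add: power2_powr_odd_half)
  also have "\<dots> \<le> (r\<^sup>2 + (norm w)\<^sup>2) powr ((real DIM('a) + 1) / 2)"
    by (intro powr_mono2) auto
  finally have "r / (r\<^sup>2 + (norm w)\<^sup>2) powr ((real DIM('a) + 1) / 2) \<le> r / r ^ (DIM('a) + 1)"
    using r by (intro divide_left_mono) auto
  also have "\<dots> = 1 / r ^ DIM('a)"
    using r by simp
  finally show ?thesis
    unfolding poisson_dil_eq[OF r] using pk_const_nonneg[where 'a='a] mult_left_mono by fastforce
qed

lemma poisson_dil_le_tail:
  fixes w :: "'a::euclidean_space"
  assumes r: "r > 0" and b: "b > 0" and wb: "b \<le> norm w"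
  shows "poisson_dil r w \<le> pk_const TYPE('a) * r / b ^ (DIM('a) + 1)"
proof -
  have "b ^ (DIM('a) + 1) = (b\<^sup>2) powr ((real DIM('a) + 1) / 2)"
    using b by (simp add: power2_powr_odd_half)
  also have "\<dots> \<le> (r\<^sup>2 + (norm w)\<^sup>2) powr ((real DIM('a) + 1) / 2)"
    using wb b by (intro powr_mono2) (auto intro!: add_increasing power_mono)
  finally have "r / (r\<^sup>2 + (norm w)\<^sup>2) powr ((real DIM('a) + 1) / 2) \<le> r / b ^ (DIM('a) + 1)"
    using r b by (intro divide_left_mono) auto
  then show ?thesis
    unfolding poisson_dil_eq[OF r] using pk_const_nonneg[where 'a='a] mult_left_mono by fastforce
qed

lemma poisson_dil_dyadic_bound:
  fixes w :: "'a::euclidean_space"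
  assumes r: "r > 0"
  obtains k where "norm w \<le> 2 ^ k * r"
    and "poisson_dil r w \<le> pk_const TYPE('a) * 2 ^ (DIM('a) + 1) / r ^ DIM('a) * (1 / 2 ^ (DIM('a) + 1)) ^ k"
proof -
  define n where "n = DIM('a)"
  define c where "c = pk_const TYPE('a)"
  have c: "c \<ge> 0"
    unfolding c_def by (rule pk_const_nonneg)
  obtain k0 :: nat where "norm w / r < 2 ^ k0"
    using real_arch_pow[of 2 "norm w / r"] by auto
  then have ex: "\<exists>k::nat. norm w \<le> 2 ^ k * r"
    using r by (auto simp: field_simps intro!: exI[of _ k0])
  define k where "k = (LEAST k::nat. norm w \<le> 2 ^ k * r)"
  have kw: "norm w \<le> 2 ^ k * r"
    unfolding k_def using ex by (rule LeastI_ex)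
  have "poisson_dil r w \<le> c * 2 ^ (n + 1) / r ^ n * (1 / 2 ^ (n + 1)) ^ k"
  proof (cases k)
    case 0
    have "poisson_dil r w \<le> c / r ^ n"
      unfolding c_def n_def using r by (rule poisson_dil_le_center)
    also have "\<dots> \<le> c * 2 ^ (n + 1) / r ^ n"
    proof (rule divide_right_mono)
      have "c * 1 \<le> c * 2 ^ (n + 1)"
        using c by (intro mult_left_mono one_le_power) auto
      then show "c \<le> c * 2 ^ (n + 1)"
        by simp
    qed (use r in simp)
    finally show ?thesis
      using 0 by simp
  next
    case (Suc j)
    have "\<not> norm w \<le> 2 ^ j * r"
      using Suc unfolding k_def by (metis Suc_n_not_le_n Least_le)
    then have "poisson_dil r w \<le> c * r / (2 ^ j * r) ^ (n + 1)"
      unfolding c_def n_def using r by (intro poisson_dil_le_tail) auto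
    also have "\<dots> = c * 2 ^ (n + 1) / r ^ n * (1 / 2 ^ (n + 1)) ^ k"
      using r Suc by (simp add: power_mult_distrib power_divide field_simps flip: power_mult power_add)
    finally show ?thesis .
  qed
  then show ?thesis
    using that kw unfolding c_def n_def by blast
qed

lemma borel_measurable_poisson_dil [measurable]:
  "poisson_dil r \<in> borel_measurable (borel :: 'a::euclidean_space measure)"
  unfolding poisson_dil_def[abs_def] poisson_kernel_def by measurable

definition poisson_growth_const :: "'a::euclidean_space itself \<Rightarrow> real" where
  "poisson_growth_const _ = (pk_const TYPE('a) + 1) * 2 ^ (DIM('a) + 2)"

lemma poisson_growth_const_pos: "poisson_growth_const TYPE('a::euclidean_space) > 0"
  unfolding poisson_growth_const_def using pk_const_nonneg[where 'a='a] by (intro mult_pos_pos) auto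

lemma poisson_dil_le_dyadic_series:
  fixes x z :: "'a::euclidean_space"
  assumes r: "r > 0"
  shows "ennreal (poisson_dil r (x - z))
    \<le> (\<Sum>k. ennreal (pk_const TYPE('a) * 2 ^ (DIM('a) + 1) / r ^ DIM('a) * (1 / 2 ^ (DIM('a) + 1)) ^ k)
          * indicator (cball x (2 ^ k * r)) z)"
    (is "_ \<le> (\<Sum>k. ?term k)")
proof -
  obtain k where k: "norm (x - z) \<le> 2 ^ k * r"
    "poisson_dil r (x - z) \<le> pk_const TYPE('a) * 2 ^ (DIM('a) + 1) / r ^ DIM('a) * (1 / 2 ^ (DIM('a) + 1)) ^ k"
    using poisson_dil_dyadic_bound[OF r] by blast
  then have "ennreal (poisson_dil r (x - z)) \<le> ?term k"
    by (simp add: dist_norm ennreal_leI)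
  also have "\<dots> \<le> (\<Sum>k. ?term k)"
    by (rule leI, rule notI, drule ennreal_suminf_lessD[where i=k]) simp
  finally show ?thesis .
qed

text \<open>Summing the dyadic kernel bounds against the growth condition gives a geometric series.\<close>

lemma poisson_conv_le_of_cball_growth:
  fixes \<nu> :: "'a::euclidean_space measure" and x :: 'a
  assumes sets: "sets \<nu> = sets borel" and L: "L \<ge> 0" and r: "r > 0"
    and growth: "\<And>\<rho>. \<rho> > 0 \<Longrightarrow> emeasure \<nu> (cball x \<rho>) \<le> ennreal (L * \<rho> ^ DIM('a))"
  shows "poisson_conv r \<nu> x \<le> ennreal (poisson_growth_const TYPE('a) * L)"
proof -
  define n where "n = DIM('a)"
  define c where "c = pk_const TYPE('a)"
  have c: "c \<ge> 0"
    unfolding c_def by (rule pk_const_nonneg)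
  define b where "b k = c * 2 ^ (n + 1) / r ^ n * (1 / 2 ^ (n + 1)) ^ k" for k :: nat
  have [measurable]: "cball x \<rho> \<in> sets borel" for \<rho>
    by simp
  have "poisson_conv r \<nu> x \<le> (\<integral>\<^sup>+ z. (\<Sum>k. ennreal (b k) * indicator (cball x (2 ^ k * r)) z) \<partial>\<nu>)"
    unfolding poisson_conv_def b_def c_def n_def using poisson_dil_le_dyadic_series[OF r]
    by (intro nn_integral_mono) auto
  also have "\<dots> = (\<Sum>k. ennreal (b k) * emeasure \<nu> (cball x (2 ^ k * r)))"
    using sets by (subst nn_integral_suminf) (auto simp: measurable_cong_sets[OF sets refl] nn_integral_cmult_indicator)
  also have "\<dots> \<le> (\<Sum>k. ennreal (c * 2 ^ (n + 1) * L * (1 / 2) ^ k))"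
  proof (intro suminf_le summableI)
    fix k
    have "ennreal (b k) * emeasure \<nu> (cball x (2 ^ k * r)) \<le> ennreal (b k) * ennreal (L * (2 ^ k * r) ^ n)"
      unfolding n_def using r by (intro mult_left_mono growth) auto
    also have "\<dots> = ennreal (c * 2 ^ (n + 1) * L * (1 / 2) ^ k)"
      unfolding b_def using r c L
      by (simp add: ennreal_mult'' [symmetric] power_mult_distrib power_divide field_simps flip: power_mult power_add)
    finally show "ennreal (b k) * emeasure \<nu> (cball x (2 ^ k * r)) \<le> ennreal (c * 2 ^ (n + 1) * L * (1 / 2) ^ k)" .
  qed
  also have "\<dots> = ennreal (\<Sum>k. c * 2 ^ (n + 1) * L * (1 / 2) ^ k)"
    using c L by (intro suminf_ennreal2) (auto intro!: summable_mult summable_geometric)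
  also have "(\<Sum>k. c * 2 ^ (n + 1) * L * (1 / 2 :: real) ^ k) = c * 2 ^ (n + 2) * L"
    by (subst suminf_mult) (auto simp: suminf_geometric)
  also have "\<dots> \<le> poisson_growth_const TYPE('a) * L"
    unfolding poisson_growth_const_def c_def[symmetric] n_def[symmetric]
    using L by (intro mult_right_mono) auto
  finally show ?thesis
    by (simp add: ennreal_leI)
qed

lemma emeasure_UN_countable_le:
  assumes I: "countable I" and X: "\<And>i. i \<in> I \<Longrightarrow> X i \<in> sets M"
  shows "emeasure M (\<Union>(X ` I)) \<le> (\<integral>\<^sup>+ i. emeasure M (X i) \<partial>count_space I)"
proof -
  have "emeasure M (\<Union>(X ` I)) = (\<integral>\<^sup>+ x. indicator (\<Union>(X ` I)) x \<partial>M)"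
    using I X by (intro nn_integral_indicator[symmetric] sets.countable_UN'') auto
  also have "\<dots> \<le> (\<integral>\<^sup>+ x. (\<integral>\<^sup>+ i. indicator (X i) x \<partial>count_space I) \<partial>M)"
  proof (intro nn_integral_mono)
    fix x
    show "indicator (\<Union>(X ` I)) x \<le> (\<integral>\<^sup>+ i. indicator (X i) x \<partial>count_space I)"
    proof (cases "x \<in> \<Union>(X ` I)")
      case True
      then obtain j where "j \<in> I" "x \<in> X j"
        by auto
      then show ?thesis
        using True nn_integral_ge_point[of j I "\<lambda>i. indicator (X i) x"] by simp
    qed simp
  qed
  also have "\<dots> = (\<integral>\<^sup>+ i. (\<integral>\<^sup>+ x. indicator (X i) x \<partial>M) \<partial>count_space I)"
    using I X by (intro nn_integral_count_space_nn_integral) auto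
  also have "\<dots> = (\<integral>\<^sup>+ i. emeasure M (X i) \<partial>count_space I)"
    using X by (intro nn_integral_cong) auto
  finally show ?thesis .
qed

lemma emeasure_UN_enlarged_cballs_le:
  fixes \<nu> :: "'a::euclidean_space measure"
  assumes sets: "sets \<nu> = sets borel" and C: "countable C" and c: "c > 0"
    and disjoint: "pairwise (\<lambda>i j. disjnt (cball i (rad i)) (cball j (rad j))) C"
    and heavy: "\<And>i. i \<in> C \<Longrightarrow> rad i > 0 \<and> ennreal (c * rad i ^ DIM('a)) \<le> emeasure \<nu> (cball i (rad i))"
  shows "emeasure lborel (\<Union>i\<in>C. cball i (5 * rad i))
    \<le> ennreal (unit_ball_vol DIM('a) * 5 ^ DIM('a) / c) * emeasure \<nu> (space \<nu>)"
proof -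
  define K where "K = unit_ball_vol DIM('a) * 5 ^ DIM('a) / c"
  have K: "K \<ge> 0"
    unfolding K_def using c by simp
  have "emeasure lborel (\<Union>i\<in>C. cball i (5 * rad i)) \<le> (\<integral>\<^sup>+ i. emeasure lborel (cball i (5 * rad i)) \<partial>count_space C)"
    using C by (intro emeasure_UN_countable_le) auto
  also have "\<dots> \<le> (\<integral>\<^sup>+ i. ennreal K * emeasure \<nu> (cball i (rad i)) \<partial>count_space C)"
  proof (intro nn_integral_mono)
    fix i assume "i \<in> space (count_space C)"
    then have i: "i \<in> C"
      by simp
    have "emeasure lborel (cball i (5 * rad i)) = ennreal (K * (c * rad i ^ DIM('a)))"
      unfolding K_def using heavy[OF i] c by (simp add: emeasure_cball power_mult_distrib)
    also have "\<dots> = ennreal K * ennreal (c * rad i ^ DIM('a))"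
      using K c heavy[OF i] by (simp add: ennreal_mult)
    also have "\<dots> \<le> ennreal K * emeasure \<nu> (cball i (rad i))"
      using heavy[OF i] by (intro mult_left_mono) auto
    finally show "emeasure lborel (cball i (5 * rad i)) \<le> ennreal K * emeasure \<nu> (cball i (rad i))" .
  qed
  also have "\<dots> = ennreal K * emeasure \<nu> (\<Union>i\<in>C. cball i (rad i))"
    using C disjoint sets
    by (subst nn_integral_cmult, simp, subst emeasure_UN_countable)
       (auto simp: disjoint_family_on_def pairwise_def disjnt_def)
  also have "\<dots> \<le> ennreal K * emeasure \<nu> (space \<nu>)"
    by (intro mult_left_mono emeasure_space) simp
  finally show ?thesis
    unfolding K_def .
qed

lemma Vitali_cover_of_heavy_balls:
  fixes \<nu> :: "'a::euclidean_space measure"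
  assumes sets: "sets \<nu> = sets borel" and fin: "emeasure \<nu> (space \<nu>) < \<infinity>" and c: "c > 0"
    and heavy: "\<And>x. x \<in> S \<Longrightarrow> \<exists>\<rho>>0. ennreal (c * \<rho> ^ DIM('a)) < emeasure \<nu> (cball x \<rho>)"
  obtains U where "U \<in> sets borel" "S \<subseteq> U"
    "emeasure lborel U \<le> ennreal (unit_ball_vol DIM('a) * 5 ^ DIM('a) / c) * emeasure \<nu> (space \<nu>)"
proof -
  define n where "n = DIM('a)"
  define m where "m = enn2real (emeasure \<nu> (space \<nu>))"
  have m: "emeasure \<nu> (space \<nu>) = ennreal m"
    unfolding m_def using fin by (simp add: ennreal_enn2real_if)
  have "\<forall>x\<in>S. \<exists>\<rho>. \<rho> > 0 \<and> ennreal (c * \<rho> ^ n) < emeasure \<nu> (cball x \<rho>)"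
    using heavy unfolding n_def by blast
  then obtain rad where rad: "\<And>x. x \<in> S \<Longrightarrow> rad x > 0 \<and> ennreal (c * rad x ^ n) < emeasure \<nu> (cball x (rad x))"
    by (metis bchoice)
  have rad_bound: "rad x \<le> max 1 (m / c)" if x: "x \<in> S" for x
  proof -
    have "ennreal (c * rad x ^ n) < ennreal m"
      using rad[OF x] emeasure_space[of \<nu>] m by (metis order_less_le_trans)
    then have "c * rad x ^ n < m"
      using c rad[OF x] by (subst (asm) ennreal_less_iff) auto
    then have "rad x ^ n < m / c"
      using c by (simp add: field_simps)
    moreover have "rad x \<le> rad x ^ n" if "rad x > 1"
      using that power_increasing[of 1 n "rad x"] DIM_ge_1[where 'a='a] unfolding n_def by simp
    ultimately show ?thesis
      by fastforce
  qed
  have covered: "S \<subseteq> (\<Union>x\<in>S. cball x (rad x))"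
    using rad by force
  obtain C where C: "countable C" "C \<subseteq> S"
    and disjoint: "pairwise (\<lambda>i j. disjnt (cball i (rad i)) (cball j (rad j))) C"
    and cover: "S \<subseteq> (\<Union>i\<in>C. cball i (5 * rad i))"
    using Vitali_covering_lemma_cballs[OF covered, where B="max 1 (m / c)"] rad rad_bound by auto
  have "(\<Union>i\<in>C. cball i (5 * rad i)) \<in> sets borel"
    using C(1) by (intro sets.countable_UN'') auto
  moreover have "emeasure lborel (\<Union>i\<in>C. cball i (5 * rad i))
      \<le> ennreal (unit_ball_vol DIM('a) * 5 ^ DIM('a) / c) * emeasure \<nu> (space \<nu>)"
    using C rad unfolding n_def by (intro emeasure_UN_enlarged_cballs_le[OF sets C(1) c disjoint]) (auto intro: less_imp_le)
  ultimately show ?thesis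
    using that cover by blast
qed

definition poisson_weak_const :: "'a::euclidean_space itself \<Rightarrow> real" where
  "poisson_weak_const _ = unit_ball_vol DIM('a) * 5 ^ DIM('a) * poisson_growth_const TYPE('a)"

lemma poisson_weak_const_nonneg: "poisson_weak_const TYPE('a::euclidean_space) \<ge> 0"
  unfolding poisson_weak_const_def using poisson_growth_const_pos[where 'a='a] by simp

text \<open>Weak type (1,1) of the Poisson maximal operator: at a point where it exceeds \<open>s\<close>, the growth
  bound must fail on some ball, and the Vitali lemma controls the union of such balls.\<close>

lemma max_poisson_weak_type:
  fixes \<nu> :: "'a::euclidean_space measure"
  assumes sets: "sets \<nu> = sets borel" and fin: "emeasure \<nu> (space \<nu>) < \<infinity>" and s: "s > 0"
  obtains U where "U \<in> sets borel" "{x. ennreal s < max_poisson \<nu> x} \<subseteq> U"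
    "emeasure lborel U \<le> ennreal (poisson_weak_const TYPE('a) / s) * emeasure \<nu> (space \<nu>)"
proof -
  define B where "B = poisson_growth_const TYPE('a)"
  have B: "B > 0"
    unfolding B_def by (rule poisson_growth_const_pos)
  have heavy: "\<exists>\<rho>>0. ennreal (s / B * \<rho> ^ DIM('a)) < emeasure \<nu> (cball x \<rho>)"
    if x: "ennreal s < max_poisson \<nu> x" for x
  proof (rule ccontr)
    assume light: "\<not> ?thesis"
    have "emeasure \<nu> (cball x \<rho>) \<le> ennreal (s / B * \<rho> ^ DIM('a))" if "\<rho> > 0" for \<rho>
    proof -
      have "\<not> ennreal (s / B * \<rho> ^ DIM('a)) < emeasure \<nu> (cball x \<rho>)"
        using light that by blast
      then show ?thesis
        by (simp add: not_less)
    qed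
    then have "poisson_conv r \<nu> x \<le> ennreal s" if "r > 0" for r
      using poisson_conv_le_of_cball_growth[OF sets _ that, of "s / B"] s B
      unfolding B_def by simp
    then have "max_poisson \<nu> x \<le> ennreal s"
      unfolding max_poisson_def by (intro SUP_least) simp
    then show False
      using x by simp
  qed
  obtain U where "U \<in> sets borel" "{x. ennreal s < max_poisson \<nu> x} \<subseteq> U"
    "emeasure lborel U \<le> ennreal (unit_ball_vol DIM('a) * 5 ^ DIM('a) / (s / B)) * emeasure \<nu> (space \<nu>)"
    using Vitali_cover_of_heavy_balls[OF sets fin, of "s / B" "{x. ennreal s < max_poisson \<nu> x}"] heavy s B
    by auto
  then show ?thesis
    using that B unfolding poisson_weak_const_def B_def by (simp add: field_simps)
qed

lemma borel_measurable_poisson_dil_shift: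
  fixes \<mu> :: "'a::euclidean_space measure"
  assumes "sets \<mu> = sets borel"
  shows "(\<lambda>z. ennreal (poisson_dil r (x - z))) \<in> borel_measurable \<mu>"
  unfolding measurable_cong_sets[OF assms refl] by measurable

lemma poisson_conv_density_indicator:
  fixes \<mu> :: "'a::euclidean_space measure"
  assumes sets: "sets \<mu> = sets borel" and A: "A \<in> sets borel"
  shows "poisson_conv r (density \<mu> (indicator A)) x = (\<integral>\<^sup>+ z. indicator A z * ennreal (poisson_dil r (x - z)) \<partial>\<mu>)"
  unfolding poisson_conv_def
proof (rule nn_integral_density)
  show "indicator A \<in> borel_measurable \<mu>"
    using A unfolding measurable_cong_sets[OF sets refl] by simp
qed (use borel_measurable_poisson_dil_shift[OF sets] in auto)

lemma max_poisson_density_le: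
  fixes \<mu> :: "'a::euclidean_space measure"
  assumes sets: "sets \<mu> = sets borel" and A: "A \<in> sets borel"
  shows "max_poisson (density \<mu> (indicator A)) x \<le> max_poisson \<mu> x"
  unfolding max_poisson_def poisson_conv_density_indicator[OF sets A]
  unfolding poisson_conv_def
  by (intro SUP_mono bexI nn_integral_mono) (auto simp: indicator_def)

lemma emeasure_density_indicator_space:
  assumes sets: "sets \<mu> = sets borel" and A: "A \<in> sets borel"
  shows "emeasure (density \<mu> (indicator A)) (space (density \<mu> (indicator A))) = emeasure \<mu> A"
proof -
  have "emeasure (density \<mu> (indicator A)) (space \<mu>) = (\<integral>\<^sup>+ z. indicator A z * indicator (space \<mu>) z \<partial>\<mu>)"
    using A by (intro emeasure_density) (auto simp: measurable_cong_sets[OF sets refl])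
  also have "\<dots> = emeasure \<mu> A"
    using A sets sets_eq_imp_space_eq[OF sets] by (simp add: nn_integral_indicator)
  finally show ?thesis
    by simp
qed
lemma max_poisson_le_add_density:
  fixes \<mu> :: "'a::euclidean_space measure"
  assumes sets: "sets \<mu> = sets borel" and A: "A \<in> sets borel"
  shows "max_poisson \<mu> x \<le> max_poisson (density \<mu> (indicator A)) x + max_poisson (density \<mu> (indicator (- A))) x"
  unfolding max_poisson_def
proof (rule SUP_least)
  fix r :: real assume r: "r \<in> {0<..}"
  have "poisson_conv r \<mu> x
      = (\<integral>\<^sup>+ z. indicator A z * ennreal (poisson_dil r (x - z)) + indicator (- A) z * ennreal (poisson_dil r (x - z)) \<partial>\<mu>)"
    unfolding poisson_conv_def by (intro nn_integral_cong) (auto split: split_indicator)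
  also have "\<dots> = poisson_conv r (density \<mu> (indicator A)) x + poisson_conv r (density \<mu> (indicator (- A))) x"
    using A sets borel_measurable_poisson_dil_shift[OF sets]
    by (simp add: poisson_conv_density_indicator measurable_cong_sets[OF sets refl] nn_integral_add)
  also have "\<dots> \<le> (SUP r\<in>{0<..}. poisson_conv r (density \<mu> (indicator A)) x)
      + (SUP r\<in>{0<..}. poisson_conv r (density \<mu> (indicator (- A))) x)"
    using r by (intro add_mono SUP_upper)
  finally show "poisson_conv r \<mu> x \<le> \<dots>" .
qed

lemma max_poisson_near_le:
  fixes \<mu> :: "'a::euclidean_space measure" and x :: 'a
  assumes sets: "sets \<mu> = sets borel" and x: "x \<noteq> 0" and d: "d < 1" and \<delta>: "\<delta> \<le> d * norm x"
  shows "max_poisson (density \<mu> (indicator (cball 0 \<delta>))) x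
    \<le> ennreal (poisson_peak_const TYPE('a) / ((1 - d) * norm x) ^ DIM('a)) * emeasure \<mu> (cball 0 \<delta>)"
  unfolding max_poisson_def
proof (rule SUP_least)
  fix r :: real assume "r \<in> {0<..}"
  then have r: "r > 0"
    by simp
  define C where "C = poisson_peak_const TYPE('a) / ((1 - d) * norm x) ^ DIM('a)"
  have "indicator (cball 0 \<delta>) z * ennreal (poisson_dil r (x - z)) \<le> ennreal C * indicator (cball 0 \<delta>) z" for z
  proof (cases "z \<in> cball 0 \<delta>")
    case True
    then have low: "(1 - d) * norm x \<le> norm (x - z)"
      using \<delta> norm_triangle_ineq2[of x z] by (simp add: algebra_simps)
    have pos: "(1 - d) * norm x > 0"
      using d x by simp
    then have "x - z \<noteq> 0"
      using low by auto
    then have "poisson_dil r (x - z) \<le> poisson_peak_const TYPE('a) / norm (x - z) ^ DIM('a)"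
      by (rule poisson_dil_le_peak[OF r])
    also have "\<dots> \<le> C"
      unfolding C_def using low pos \<open>x - z \<noteq> 0\<close> poisson_peak_const_nonneg[where 'a='a]
      by (intro divide_left_mono power_mono mult_pos_pos) auto
    finally have "poisson_dil r (x - z) \<le> C" .
    then show ?thesis
      using True by (simp add: ennreal_leI)
  qed simp
  then have "poisson_conv r (density \<mu> (indicator (cball 0 \<delta>))) x \<le> (\<integral>\<^sup>+ z. ennreal C * indicator (cball 0 \<delta>) z \<partial>\<mu>)"
    unfolding poisson_conv_density_indicator[OF sets borel_closed[OF closed_cball]]
    by (intro nn_integral_mono) simp
  also have "\<dots> = ennreal C * emeasure \<mu> (cball 0 \<delta>)"
    using sets by (intro nn_integral_cmult_indicator) simp
  finally show "poisson_conv r (density \<mu> (indicator (cball 0 \<delta>))) x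
      \<le> ennreal (poisson_peak_const TYPE('a) / ((1 - d) * norm x) ^ DIM('a)) * emeasure \<mu> (cball 0 \<delta>)"
    unfolding C_def .
qed

lemma max_poisson_near_ge:
  fixes \<mu> :: "'a::euclidean_space measure" and x :: 'a
  assumes sets: "sets \<mu> = sets borel" and x: "x \<noteq> 0" and d: "d \<ge> 0" and \<delta>: "\<delta> \<le> d * norm x"
  shows "ennreal (poisson_peak_const TYPE('a) / norm x ^ DIM('a) / (1 + d) ^ (DIM('a) + 1)) * emeasure \<mu> (cball 0 \<delta>)
    \<le> max_poisson \<mu> x"
proof -
  define r where "r = norm x / sqrt DIM('a)"
  have r: "r > 0"
    unfolding r_def using x by simp
  define C where "C = poisson_peak_const TYPE('a) / norm x ^ DIM('a) / (1 + d) ^ (DIM('a) + 1)"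
  have pointwise: "ennreal C * indicator (cball 0 \<delta>) z \<le> indicator (cball 0 \<delta>) z * ennreal (poisson_dil r (x - z))" for z
  proof (cases "z \<in> cball 0 \<delta>")
    case True
    then have "norm (x - z) \<le> (1 + d) * norm x"
      using \<delta> norm_triangle_ineq4[of x z] by (simp add: algebra_simps)
    then have "poisson_dil r x / (1 + d) ^ (DIM('a) + 1) \<le> poisson_dil r (x - z)"
      by (rule poisson_dil_lower_of_norm_le[OF r d])
    then show ?thesis
      using True x unfolding C_def r_def by (simp add: poisson_dil_peak ennreal_leI)
  qed simp
  have "ennreal C * emeasure \<mu> (cball 0 \<delta>) = (\<integral>\<^sup>+ z. ennreal C * indicator (cball 0 \<delta>) z \<partial>\<mu>)"
    using sets by (intro nn_integral_cmult_indicator[symmetric]) simp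
  also have "\<dots> \<le> poisson_conv r (density \<mu> (indicator (cball 0 \<delta>))) x"
    unfolding poisson_conv_density_indicator[OF sets borel_closed[OF closed_cball]]
    using pointwise by (intro nn_integral_mono) simp
  also have "\<dots> \<le> max_poisson (density \<mu> (indicator (cball 0 \<delta>))) x"
    unfolding max_poisson_def using r by (intro SUP_upper) simp
  also have "\<dots> \<le> max_poisson \<mu> x"
    using sets by (intro max_poisson_density_le) auto
  finally show ?thesis
    unfolding C_def .
qed

definition concentration_error :: "nat \<Rightarrow> real \<Rightarrow> real" where
  "concentration_error n d = (1 / (1 - d) ^ n - 1) + (1 - 1 / (1 + d) ^ (n + 1))"

lemma concentration_error_nonneg:
  assumes "0 \<le> d" "d < 1"
  shows "0 \<le> concentration_error n d"
proof -
  have "1 \<le> 1 / (1 - d) ^ n"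
    using assms by (simp add: power_le_one)
  moreover have "1 \<le> (1 + d) ^ (n + 1)"
    using assms by (intro one_le_power) simp
  then have "1 / (1 + d) ^ (n + 1) \<le> 1"
    by simp
  ultimately show ?thesis
    unfolding concentration_error_def by simp
qed

lemma enn2real_abs_diff_le_of_sandwich:
  fixes M T :: ennreal and a b c p q :: real
  assumes lower: "ennreal (a * q) \<le> M" and upper: "M \<le> ennreal (a * p) + T"
    and pq: "0 \<le> q" "q \<le> 1" "1 \<le> p" and abc: "0 \<le> a" "a \<le> b" "0 \<le> c"
  shows "ennreal \<bar>enn2real M - (a + c)\<bar> \<le> ennreal (b * ((p - 1) + (1 - q)) + c) + T"
proof (cases "T = \<infinity>")
  case False
  then obtain \<tau> where \<tau>: "T = ennreal \<tau>" "0 \<le> \<tau>"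
    by (cases T) auto
  have M: "M \<le> ennreal (a * p + \<tau>)"
    using upper pq abc \<tau> by (simp add: ennreal_plus)
  then have "enn2real M \<le> a * p + \<tau>"
    using pq abc \<tau> by (intro enn2real_leI) auto
  moreover have "a * q \<le> enn2real M"
    using enn2real_mono[OF lower] M pq abc by (simp add: le_less_trans)
  moreover have "a * (p - 1) \<le> b * (p - 1)" "a * (1 - q) \<le> b * (1 - q)" "0 \<le> b * (p - 1)" "0 \<le> b * (1 - q)"
    using pq abc by (auto intro: mult_right_mono)
  ultimately have "\<bar>enn2real M - (a + c)\<bar> \<le> b * ((p - 1) + (1 - q)) + c + \<tau>"
    using abc \<tau>(2) unfolding abs_le_iff by (simp add: algebra_simps)
  moreover have "0 \<le> b * ((p - 1) + (1 - q)) + c"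
    using pq abc by simp
  ultimately show ?thesis
    using \<tau> by (simp add: ennreal_plus[symmetric] ennreal_leI del: ennreal_plus)
qed simp

definition max_poisson_deviation :: "'a::euclidean_space measure \<Rightarrow> 'a \<Rightarrow> real" where
  "max_poisson_deviation \<mu> x
     = enn2real (max_poisson \<mu> x) - poisson_peak_const TYPE('a) * measure \<mu> (space \<mu>) / norm x ^ DIM('a)"

text \<open>
  Splitting \<open>\<mu>\<close> at radius \<open>\<delta>\<close>: the mass inside \<open>cball 0 \<delta>\<close> sees the kernel at \<open>x - z\<close> with
  \<open>norm z \<le> d * norm x\<close>, hence contributes between \<open>1 / (1 + d)^(n + 1)\<close> and \<open>1 / (1 - d)^n\<close> times
  the maximal function of a point mass at the origin; the mass outside only adds its own maximal function.
\<close>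

lemma max_poisson_deviation_le:
  fixes \<mu> :: "'a::euclidean_space measure" and x :: 'a
  assumes fin: "finite_measure \<mu>" and sets: "sets \<mu> = sets borel" and x: "x \<noteq> 0"
    and d: "0 \<le> d" "d < 1" and \<delta>: "\<delta> \<le> d * norm x"
  shows "ennreal \<bar>max_poisson_deviation \<mu> x\<bar>
    \<le> ennreal (poisson_peak_const TYPE('a) * (measure \<mu> (space \<mu>) * concentration_error DIM('a) d
          + measure \<mu> (- cball 0 \<delta>)) / norm x ^ DIM('a))
      + max_poisson (density \<mu> (indicator (- cball 0 \<delta>))) x"
proof -
  interpret finite_measure \<mu>
    by (rule fin)
  define n where "n = DIM('a)"
  define C where "C = poisson_peak_const TYPE('a) / norm x ^ n"
  have C: "C \<ge> 0"
    unfolding C_def using poisson_peak_const_nonneg[where 'a='a] by simp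
  define m1 where "m1 = measure \<mu> (cball 0 \<delta>)"
  define m2 where "m2 = measure \<mu> (- cball 0 \<delta>)"
  define m where "m = measure \<mu> (space \<mu>)"
  have m: "m = m1 + m2"
    using finite_measure_compl[of "cball 0 \<delta>"] sets sets_eq_imp_space_eq[OF sets]
    unfolding m_def m1_def m2_def by (simp add: Compl_eq_Diff_UNIV)
  have m1: "emeasure \<mu> (cball 0 \<delta>) = ennreal m1" "m1 \<ge> 0"
    unfolding m1_def by (simp_all add: emeasure_eq_measure)
  define p where "p = 1 / (1 - d) ^ n"
  define q where "q = 1 / (1 + d) ^ (n + 1)"
  have pq: "0 \<le> q" "q \<le> 1" "1 \<le> p"
    unfolding p_def q_def using d one_le_power[of "1 + d" "n + 1"] by (auto simp: power_le_one)
  define T where "T = max_poisson (density \<mu> (indicator (- cball 0 \<delta>))) x"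
  have "max_poisson \<mu> x \<le> max_poisson (density \<mu> (indicator (cball 0 \<delta>))) x + T"
    unfolding T_def using sets by (intro max_poisson_le_add_density) auto
  also have "\<dots> \<le> ennreal (C * m1 * p) + T"
  proof -
    have "ennreal (poisson_peak_const TYPE('a) / ((1 - d) * norm x) ^ DIM('a)) * emeasure \<mu> (cball 0 \<delta>)
        = ennreal (C * m1 * p)"
      unfolding m1(1) by (subst ennreal_mult''[symmetric]) (simp_all add: m1(2) C_def p_def n_def power_mult_distrib mult.commute)
    then show ?thesis
      using max_poisson_near_le[OF sets x d(2) \<delta>] by (simp add: add_right_mono)
  qed
  finally have upper: "max_poisson \<mu> x \<le> ennreal (C * m1 * p) + T" .
  have "ennreal (C * m1 * q)
      = ennreal (poisson_peak_const TYPE('a) / norm x ^ DIM('a) / (1 + d) ^ (DIM('a) + 1)) * emeasure \<mu> (cball 0 \<delta>)"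
    unfolding m1(1) by (subst ennreal_mult''[symmetric]) (simp_all add: m1(2) C_def q_def n_def mult.commute)
  also have "\<dots> \<le> max_poisson \<mu> x"
    by (rule max_poisson_near_ge[OF sets x d(1) \<delta>])
  finally have lower: "ennreal (C * m1 * q) \<le> max_poisson \<mu> x" .
  have "ennreal \<bar>enn2real (max_poisson \<mu> x) - (C * m1 + C * m2)\<bar>
      \<le> ennreal (C * m * ((p - 1) + (1 - q)) + C * m2) + T"
    using pq C m m1 by (intro enn2real_abs_diff_le_of_sandwich[OF lower upper]) (auto simp: m2_def intro: mult_left_mono)
  moreover have "C * m1 + C * m2 = C * m" "C * m * ((p - 1) + (1 - q)) + C * m2 = C * (m * concentration_error n d + m2)"
    unfolding m concentration_error_def p_def q_def by (simp_all add: algebra_simps)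
  ultimately show ?thesis
    unfolding max_poisson_deviation_def T_def C_def m_def m2_def n_def by simp
qed

lemma ennreal_less_add_half_cases:
  fixes T :: ennreal
  assumes less: "ennreal s < ennreal u + T" and s: "s \<ge> 0"
  shows "s / 2 < u \<or> ennreal (s / 2) < T"
proof (rule ccontr)
  assume "\<not> ?thesis"
  then have "ennreal u + T \<le> ennreal (s / 2) + ennreal (s / 2)"
    by (intro add_mono ennreal_leI) (auto simp: not_less)
  also have "\<dots> = ennreal s"
    using s by (subst ennreal_plus[symmetric]) auto
  finally show False
    using less by simp
qed

lemma max_poisson_deviation_level_set:
  fixes \<mu> :: "'a::euclidean_space measure"
  assumes fin: "finite_measure \<mu>" and sets: "sets \<mu> = sets borel" and \<rho>: "\<rho> > 0"
    and d: "0 \<le> d" "d < 1" and \<delta>: "\<delta> \<le> d * \<rho>" and s: "s > 0"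
  defines "\<eta> \<equiv> poisson_peak_const TYPE('a) * (measure \<mu> (space \<mu>) * concentration_error DIM('a) d
      + measure \<mu> (- cball 0 \<delta>))"
  shows "{x \<in> UNIV - ball 0 \<rho>. s < \<bar>max_poisson_deviation \<mu> x\<bar>}
    \<subseteq> cball 0 (root DIM('a) (2 * \<eta> / s))
      \<union> {x. ennreal (s / 2) < max_poisson (density \<mu> (indicator (- cball 0 \<delta>))) x}"
proof
  fix x assume "x \<in> {x \<in> UNIV - ball 0 \<rho>. s < \<bar>max_poisson_deviation \<mu> x\<bar>}"
  then have x\<rho>: "\<rho> \<le> norm x" and big: "s < \<bar>max_poisson_deviation \<mu> x\<bar>"
    by (auto simp: dist_norm)
  have x: "x \<noteq> 0"
    using x\<rho> \<rho> by auto
  have \<eta>: "\<eta> \<ge> 0"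
    unfolding \<eta>_def using poisson_peak_const_nonneg[where 'a='a] concentration_error_nonneg[OF d]
    by simp
  have "\<delta> \<le> d * norm x"
    using \<delta> x\<rho> d(1) by (meson mult_left_mono order_trans)
  then have "ennreal \<bar>max_poisson_deviation \<mu> x\<bar>
      \<le> ennreal (\<eta> / norm x ^ DIM('a)) + max_poisson (density \<mu> (indicator (- cball 0 \<delta>))) x"
    unfolding \<eta>_def by (rule max_poisson_deviation_le[OF fin sets x d])
  moreover have "ennreal s < ennreal \<bar>max_poisson_deviation \<mu> x\<bar>"
    using big s by (simp add: ennreal_less_iff)
  ultimately have "ennreal s < ennreal (\<eta> / norm x ^ DIM('a)) + max_poisson (density \<mu> (indicator (- cball 0 \<delta>))) x"
    by (rule order.strict_trans2[rotated])
  then consider "s / 2 < \<eta> / norm x ^ DIM('a)"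
    | "ennreal (s / 2) < max_poisson (density \<mu> (indicator (- cball 0 \<delta>))) x"
    using ennreal_less_add_half_cases less_imp_le[OF s] by blast
  then show "x \<in> cball 0 (root DIM('a) (2 * \<eta> / s))
      \<union> {x. ennreal (s / 2) < max_poisson (density \<mu> (indicator (- cball 0 \<delta>))) x}"
  proof cases
    case 1
    then have "norm x ^ DIM('a) < 2 * \<eta> / s"
      using x s by (simp add: pos_less_divide_eq field_simps)
    also have "\<dots> = root DIM('a) (2 * \<eta> / s) ^ DIM('a)"
      by (rule real_root_pow_pos2[symmetric]) (use s \<eta> in auto)
    finally have "norm x < root DIM('a) (2 * \<eta> / s)"
      by (rule power_less_imp_less_base) (use s \<eta> in auto)
    then show ?thesis
      by simp
  qed simp
qed

lemma max_poisson_deviation_level_set_measure: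
  fixes \<mu> :: "'a::euclidean_space measure"
  assumes fin: "finite_measure \<mu>" and sets: "sets \<mu> = sets borel" and \<rho>: "\<rho> > 0"
    and d: "0 \<le> d" "d < 1" and \<delta>: "\<delta> \<le> d * \<rho>" and s: "s > 0"
  defines "\<eta> \<equiv> poisson_peak_const TYPE('a) * (measure \<mu> (space \<mu>) * concentration_error DIM('a) d
      + measure \<mu> (- cball 0 \<delta>))"
  shows "emeasure lebesgue {x \<in> UNIV - ball 0 \<rho>. s < \<bar>max_poisson_deviation \<mu> x\<bar>}
    \<le> ennreal (unit_ball_vol DIM('a) * (2 * \<eta> / s) + poisson_weak_const TYPE('a) / (s / 2) * measure \<mu> (- cball 0 \<delta>))"
proof -
  interpret finite_measure \<mu>
    by (rule fin)
  have \<eta>: "\<eta> \<ge> 0"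
    unfolding \<eta>_def using poisson_peak_const_nonneg[where 'a='a] concentration_error_nonneg[OF d]
    by simp
  define R where "R = root DIM('a) (2 * \<eta> / s)"
  have R: "R \<ge> 0" "R ^ DIM('a) = 2 * \<eta> / s"
    unfolding R_def using s \<eta> by (simp_all add: real_root_pow_pos2)
  define \<nu> where "\<nu> = density \<mu> (indicator (- cball 0 \<delta>))"
  have sets_\<nu>: "sets \<nu> = sets borel" and mass_\<nu>: "emeasure \<nu> (space \<nu>) = ennreal (measure \<mu> (- cball 0 \<delta>))"
    unfolding \<nu>_def using sets emeasure_density_indicator_space[OF sets, of "- cball 0 \<delta>"]
    by (auto simp: emeasure_eq_measure)
  obtain U where U: "U \<in> sets borel" "{x. ennreal (s / 2) < max_poisson \<nu> x} \<subseteq> U"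
    "emeasure lborel U \<le> ennreal (poisson_weak_const TYPE('a) / (s / 2)) * emeasure \<nu> (space \<nu>)"
    using max_poisson_weak_type[OF sets_\<nu>, of "s / 2"] s mass_\<nu> by auto
  have covered: "{x \<in> UNIV - ball 0 \<rho>. s < \<bar>max_poisson_deviation \<mu> x\<bar>} \<subseteq> cball 0 R \<union> U"
    using max_poisson_deviation_level_set[OF fin sets \<rho> d \<delta> s] U(2)
    unfolding R_def \<eta>_def \<nu>_def by blast
  have "emeasure lebesgue {x \<in> UNIV - ball 0 \<rho>. s < \<bar>max_poisson_deviation \<mu> x\<bar>} \<le> emeasure lebesgue (cball 0 R \<union> U)"
    using U(1) by (intro emeasure_mono[OF covered]) simp
  also have "\<dots> = emeasure lborel (cball 0 R \<union> U)"
    using U(1) by simp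
  also have "\<dots> \<le> emeasure lborel (cball (0::'a) R) + emeasure lborel U"
    using U(1) by (intro emeasure_subadditive) auto
  also have "\<dots> \<le> ennreal (unit_ball_vol DIM('a) * R ^ DIM('a))
      + ennreal (poisson_weak_const TYPE('a) / (s / 2)) * ennreal (measure \<mu> (- cball 0 \<delta>))"
    using U(3) R mass_\<nu> by (simp add: emeasure_cball)
  also have "\<dots> = ennreal (unit_ball_vol DIM('a) * (2 * \<eta> / s)
      + poisson_weak_const TYPE('a) / (s / 2) * measure \<mu> (- cball 0 \<delta>))"
    using R \<eta> poisson_weak_const_nonneg[where 'a='a] s
    by (simp add: ennreal_mult''[symmetric] ennreal_plus[symmetric] del: ennreal_plus)
  finally show ?thesis .
qed

lemma weak_L1_max_poisson_deviation_le:
  fixes \<mu> :: "'a::euclidean_space measure"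
  assumes fin: "finite_measure \<mu>" and sets: "sets \<mu> = sets borel" and \<rho>: "\<rho> > 0"
    and d: "0 \<le> d" "d < 1" and \<delta>: "\<delta> \<le> d * \<rho>"
  shows "weak_L1_norm (UNIV - ball 0 \<rho>) (max_poisson_deviation \<mu>)
    \<le> ennreal (2 * unit_ball_vol DIM('a) * poisson_peak_const TYPE('a)
          * (measure \<mu> (space \<mu>) * concentration_error DIM('a) d + measure \<mu> (- cball 0 \<delta>))
        + 2 * poisson_weak_const TYPE('a) * measure \<mu> (- cball 0 \<delta>))"
  unfolding weak_L1_norm_def
proof (rule SUP_least)
  fix s :: real assume "s \<in> {0<..}"
  then have s: "s > 0"
    by simp
  define \<eta> where "\<eta> = poisson_peak_const TYPE('a) * (measure \<mu> (space \<mu>) * concentration_error DIM('a) d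
      + measure \<mu> (- cball 0 \<delta>))"
  let ?level = "{x \<in> UNIV - ball 0 \<rho>. s < \<bar>max_poisson_deviation \<mu> x\<bar>}"
  have "ennreal s * emeasure lebesgue ?level
      \<le> ennreal s * ennreal (unit_ball_vol DIM('a) * (2 * \<eta> / s)
          + poisson_weak_const TYPE('a) / (s / 2) * measure \<mu> (- cball 0 \<delta>))"
    using max_poisson_deviation_level_set_measure[OF fin sets \<rho> d \<delta> s]
    unfolding \<eta>_def by (rule mult_left_mono) simp
  also have "\<dots> = ennreal (s * (unit_ball_vol DIM('a) * (2 * \<eta> / s)
      + poisson_weak_const TYPE('a) / (s / 2) * measure \<mu> (- cball 0 \<delta>)))"
    using s by (intro ennreal_mult'[symmetric]) simp
  also have "s * (unit_ball_vol DIM('a) * (2 * \<eta> / s)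
      + poisson_weak_const TYPE('a) / (s / 2) * measure \<mu> (- cball 0 \<delta>))
    = 2 * unit_ball_vol DIM('a) * \<eta> + 2 * poisson_weak_const TYPE('a) * measure \<mu> (- cball 0 \<delta>)"
    using s by (simp add: field_simps)
  finally show "ennreal s * emeasure lebesgue ?level \<le> ennreal (2 * unit_ball_vol DIM('a) * poisson_peak_const TYPE('a)
          * (measure \<mu> (space \<mu>) * concentration_error DIM('a) d + measure \<mu> (- cball 0 \<delta>))
        + 2 * poisson_weak_const TYPE('a) * measure \<mu> (- cball 0 \<delta>))"
    unfolding \<eta>_def by (simp add: mult_ac)
qed

lemma sets_meas_dilate [simp]: "sets (meas_dilate t V) = sets borel"
  unfolding meas_dilate_def by simp

lemma measurable_scaleR_of_sets_borel:
  fixes V :: "'a::euclidean_space measure"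
  assumes "sets V = sets borel"
  shows "(\<lambda>y. t *\<^sub>R y) \<in> V \<rightarrow>\<^sub>M (borel :: 'a measure)"
  unfolding measurable_cong_sets[OF assms refl] by measurable

lemma finite_measure_meas_dilate:
  fixes V :: "'a::euclidean_space measure"
  assumes "finite_measure V" "sets V = sets borel"
  shows "finite_measure (meas_dilate t V)"
  unfolding meas_dilate_def
  using finite_measure.finite_measure_distr[OF assms(1) measurable_scaleR_of_sets_borel[OF assms(2)]] .

lemma measure_meas_dilate:
  fixes V :: "'a::euclidean_space measure"
  assumes sets: "sets V = sets borel" and A: "A \<in> sets borel"
  shows "measure (meas_dilate t V) A = measure V ((\<lambda>y. t *\<^sub>R y) -` A)"
  unfolding meas_dilate_def using A sets_eq_imp_space_eq[OF sets]
  by (subst measure_distr[OF measurable_scaleR_of_sets_borel[OF sets]]) auto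

lemma measure_meas_dilate_space:
  fixes V :: "'a::euclidean_space measure"
  assumes "sets V = sets borel"
  shows "measure (meas_dilate t V) (space (meas_dilate t V)) = measure V (space V)"
  using measure_meas_dilate[OF assms, of UNIV t] sets_eq_imp_space_eq[OF assms]
    sets_eq_imp_space_eq[OF sets_meas_dilate[of t V]] by simp

lemma measure_meas_dilate_compl_cball:
  fixes V :: "'a::euclidean_space measure"
  assumes "sets V = sets borel" and t: "t > 0"
  shows "measure (meas_dilate t V) (- cball 0 (t * R)) = measure V (- cball 0 R)"
proof -
  have "(\<lambda>y. t *\<^sub>R y) -` (- cball 0 (t * R)) = - cball (0::'a) R"
    using t by auto
  then show ?thesis
    using measure_meas_dilate[OF assms(1), of "- cball 0 (t * R)" t] by simp
qed

lemma weak_L1_max_poisson_dilate_le: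
  fixes V :: "'a::euclidean_space measure"
  assumes fin: "finite_measure V" and sets: "sets V = sets borel" and \<rho>: "\<rho> > 0"
    and R: "R > 0" and t: "t > 0" and small: "t * R < \<rho>"
  shows "weak_L1_norm (UNIV - ball 0 \<rho>) (max_poisson_deviation (meas_dilate t V))
    \<le> ennreal (2 * unit_ball_vol DIM('a) * poisson_peak_const TYPE('a)
          * (measure V (space V) * concentration_error DIM('a) (t * R / \<rho>) + measure V (- cball 0 R))
        + 2 * poisson_weak_const TYPE('a) * measure V (- cball 0 R))"
proof -
  have "0 \<le> t * R / \<rho>" "t * R / \<rho> < 1" "t * R \<le> t * R / \<rho> * \<rho>"
    using \<rho> R t small by simp_all
  from weak_L1_max_poisson_deviation_le[OF finite_measure_meas_dilate[OF fin sets, of t] sets_meas_dilate \<rho> this]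
  show ?thesis
    unfolding measure_meas_dilate_space[OF sets] measure_meas_dilate_compl_cball[OF sets t] .
qed

lemma tendsto_measure_compl_cball:
  fixes V :: "'a::euclidean_space measure"
  assumes fin: "finite_measure V" and sets: "sets V = sets borel"
  shows "((\<lambda>R. measure V (- cball 0 R)) \<longlongrightarrow> 0) at_top"
proof (rule order_tendstoI)
  interpret finite_measure V
    by (rule fin)
  fix a :: real assume a: "0 < a"
  have "(\<lambda>k. measure V (- cball 0 (real k))) \<longlonglongrightarrow> measure V (\<Inter>k. - cball 0 (real k))"
  proof (rule finite_Lim_measure_decseq)
    show "decseq (\<lambda>k. - cball (0::'a) (real k))"
      by (rule decseq_SucI) auto
    show "range (\<lambda>k. - cball (0::'a) (real k)) \<subseteq> sets V"
      unfolding sets by (auto intro: borel_comp)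
  qed
  moreover have "(\<Inter>k. - cball (0::'a) (real k)) = {}"
  proof -
    have "y \<notin> (\<Inter>k. - cball 0 (real k))" for y :: 'a
    proof -
      obtain k :: nat where "norm y \<le> real k"
        using real_arch_simple by blast
      then show ?thesis
        by auto
    qed
    then show ?thesis
      by blast
  qed
  ultimately have "\<forall>\<^sub>F k in sequentially. measure V (- cball 0 (real k)) < a"
    using a by (simp add: order_tendstoD(2))
  then obtain k where k: "measure V (- cball 0 (real k)) < a"
    by (auto simp: eventually_sequentially)
  have "measure V (- cball 0 R) \<le> measure V (- cball 0 (real k))" if "R \<ge> real k" for R
    by (rule finite_measure_mono) (use that sets in auto)
  then show "\<forall>\<^sub>F R in at_top. measure V (- cball 0 R) < a"
    unfolding eventually_at_top_linorder using k by (meson order.strict_trans1)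
next
  fix a :: real assume "a < 0"
  then show "\<forall>\<^sub>F R in at_top. a < measure V (- cball 0 R)"
    by (intro always_eventually allI) (simp add: less_le_trans[OF _ measure_nonneg])
qed

lemma concentration_error_tendsto_0:
  "((\<lambda>t. concentration_error n (t * R / \<rho>)) \<longlongrightarrow> 0) (at_right 0)"
proof -
  have "((\<lambda>t. concentration_error n (t * (R / \<rho>))) \<longlongrightarrow> concentration_error n (0 * (R / \<rho>))) (at_right 0)"
    unfolding concentration_error_def by (intro tendsto_intros) auto
  then show ?thesis
    by (simp add: concentration_error_def)
qed

lemma tendsto_at_right_0_of_tail_bound:
  fixes W :: "real \<Rightarrow> ennreal" and tail :: "real \<Rightarrow> real"
  assumes tail: "(tail \<longlongrightarrow> 0) at_top" and K: "K \<ge> 0"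
    and g: "\<And>R. R > 0 \<Longrightarrow> (g R \<longlongrightarrow> 0) (at_right 0)"
    and bound: "\<And>R. R > 0 \<Longrightarrow> \<forall>\<^sub>F t in at_right 0. W t \<le> ennreal (g R t + K * tail R)"
  shows "(W \<longlongrightarrow> 0) (at_right 0)"
proof (rule order_tendstoI)
  fix a :: ennreal assume "0 < a"
  then obtain b where b: "0 < b" "b < a"
    using dense by blast
  then obtain e where e: "b = ennreal e" "e > 0"
    using less_top_ennreal[of b] by (cases b) (auto simp: top_unique)
  have "((\<lambda>R. K * tail R) \<longlongrightarrow> K * 0) at_top"
    using tail by (intro tendsto_intros)
  then have "\<forall>\<^sub>F R in at_top. K * tail R < e / 2 \<and> R > 0"
    using e(2) order_tendstoD(2)[of _ 0 at_top "e / 2"] by (auto intro!: eventually_conj eventually_gt_at_top)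
  then obtain R where R: "K * tail R < e / 2" "R > 0"
    by (auto simp: eventually_at_top_linorder)
  have "\<forall>\<^sub>F t in at_right 0. g R t < e / 2"
    using g[OF R(2)] e(2) by (intro order_tendstoD(2)) auto
  with bound[OF R(2)] show "\<forall>\<^sub>F t in at_right 0. W t < a"
  proof eventually_elim
    case (elim t)
    then have "W t \<le> ennreal e"
      using R(1) by (auto elim!: order_trans intro!: ennreal_leI)
    then show "W t < a"
      using b e(1) by simp
  qed
qed simp

theorem corollary2p5:
  fixes V :: "'a::euclidean_space measure" and \<rho> :: real
  assumes "finite_measure V"
    and "sets V = sets borel"
    and "absolutely_continuous lborel V"
    and "\<rho> > 0"
  shows "((\<lambda>t. weak_L1_norm (UNIV - ball 0 \<rho>)
            (\<lambda>x. enn2real (max_poisson (meas_dilate t V) x)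
                 - pk_const TYPE('a) * real DIM('a) powr (real DIM('a) / 2)
                   / (1 + real DIM('a)) powr ((real DIM('a) + 1) / 2)
                   * measure V (space V) / norm x ^ DIM('a)))
          \<longlongrightarrow> 0) (at_right 0)"
proof -
  note fin = assms(1) and sets = assms(2) and \<rho> = assms(4)
  define W where "W t = weak_L1_norm (UNIV - ball 0 \<rho>) (max_poisson_deviation (meas_dilate t V))" for t
  define c where "c = 2 * unit_ball_vol DIM('a) * poisson_peak_const TYPE('a)"
  define K where "K = c + 2 * poisson_weak_const TYPE('a)"
  have "(W \<longlongrightarrow> 0) (at_right 0)"
  proof (rule tendsto_at_right_0_of_tail_bound[OF tendsto_measure_compl_cball[OF fin sets],
        where g = "\<lambda>R t. c * measure V (space V) * concentration_error DIM('a) (t * R / \<rho>)"])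
    show "K \<ge> 0"
      unfolding K_def c_def using poisson_peak_const_nonneg[where 'a='a] poisson_weak_const_nonneg[where 'a='a]
      by simp
    fix R :: real assume R: "R > 0"
    show "((\<lambda>t. c * measure V (space V) * concentration_error DIM('a) (t * R / \<rho>)) \<longlongrightarrow> 0) (at_right 0)"
      by (intro tendsto_mult_right_zero concentration_error_tendsto_0)
    have "((\<lambda>t. t * R) \<longlongrightarrow> 0 * R) (at_right 0)"
      by (intro tendsto_intros)
    then have "\<forall>\<^sub>F t in at_right 0. 0 < t \<and> t * R < \<rho>"
      using \<rho> by (simp add: eventually_conj eventually_at_right_less order_tendstoD(2))
    then show "\<forall>\<^sub>F t in at_right 0.
        W t \<le> ennreal (c * measure V (space V) * concentration_error DIM('a) (t * R / \<rho>) + K * measure V (- cball 0 R))"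
      unfolding W_def K_def c_def
      by (rule eventually_mono) (use weak_L1_max_poisson_dilate_le[OF fin sets \<rho> R] in \<open>auto simp: algebra_simps\<close>)
  qed
  then show ?thesis
    unfolding W_def max_poisson_deviation_def measure_meas_dilate_space[OF sets] poisson_peak_const_def .
qed

end
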